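(* Let $L\ge1$ and let $\tilde\eta_L:\mathbb{R}^2\to[0,1]$ be a smooth function depending only on $x_2$, with all derivatives bounded, and supported in $\{x\in E:\ x_2>\sqrt L/4\}$ (extended by zero to $x_2<0$). Then for every $\psi\in D(H_b)$, the function $\tilde\eta_L\psi$ (restricted to $E$) lies in $D(H_b^E)$ and $$H_b^E\,\tilde\eta_L\psi=H_b\,\tilde\eta_L\psi.$$
   Context: $E=\mathbb{R}\times[0,\infty)$; $\sigma=(\sigma_1,\sigma_2)$ with Pauli matrices $\sigma_1=\begin{pmatrix}0&1\\1&0\end{pmatrix}$, $\sigma_2=\begin{pmatrix}0&-\mathrm{i}\\ \mathrm{i}&0\end{pmatrix}$; $\tilde A(x)=(-x_2,0)$; $b\ge0$. $H_b$ is the self-adjoint closure of $(-\mathrm{i}\nabla-b\tilde A)\cdot\sigma$ on $C_0^\infty(\mathbb{R}^2,\mathbb{C}^2)$ in $L^2(\mathbb{R}^2,\mathbb{C}^2)$. With $\mathscr S_+$ the restrictions to $E$ of Schwartz functions on $\mathbb{R}^2$ and $\mathscr M=\{\psi=(\psi_1,\psi_2)\in\mathscr S_+\oplus\mathscr S_+:\ \psi_1(x_1,0)=\psi_2(x_1,0)\ \forall x_1,\ \forall\alpha\ \exists c,C>0:\ |\partial^\alpha\psi(x)|\le C\mathrm{e}^{-c|x|}\}$, $H_b^E$ is the closure of $(-\mathrm{i}\nabla-b\tilde A)\cdot\sigma$ on $\mathscr M$ in $L^2(E,\mathbb{C}^2)$. *)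

theory Defs
  imports "HOL-Analysis.Analysis"
begin

type_synonym pt = "real \<times> real"
type_synonym spinor = "complex \<times> complex"

definition halfplane :: "pt set" where
  "halfplane = {x. snd x \<ge> 0}"

(* partial derivatives of a function on R^2 (True = d/dx1, False = d/dx2) *)
definition pd :: "bool \<Rightarrow> (pt \<Rightarrow> 'b::real_normed_vector) \<Rightarrow> pt \<Rightarrow> 'b" where
  "pd i f x = (if i then vector_derivative (\<lambda>t. f (t, snd x)) (at (fst x))
               else vector_derivative (\<lambda>t. f (fst x, t)) (at (snd x)))"

fun iter_pd :: "bool list \<Rightarrow> (pt \<Rightarrow> 'b::real_normed_vector) \<Rightarrow> pt \<Rightarrow> 'b" where
  "iter_pd [] f = f"
| "iter_pd (i # ds) f = pd i (iter_pd ds f)"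

definition smooth :: "(pt \<Rightarrow> 'b::real_normed_vector) \<Rightarrow> bool" where
  "smooth f \<longleftrightarrow> (\<forall>ds. iter_pd ds f differentiable_on UNIV)"

definition C0inf :: "(pt \<Rightarrow> spinor) \<Rightarrow> bool" where
  "C0inf f \<longleftrightarrow> smooth f \<and> bounded {x. f x \<noteq> 0}"

definition schwartz :: "(pt \<Rightarrow> spinor) \<Rightarrow> bool" where
  "schwartz f \<longleftrightarrow> smooth f \<and>
     (\<forall>ds k. \<exists>C. \<forall>x. (1 + norm x) ^ k * norm (iter_pd ds f x) \<le> C)"

(* Phi is a Schwartz function on R^2 whose restriction to E lies in the core M *)
definition inM :: "(pt \<Rightarrow> spinor) \<Rightarrow> bool" where
  "inM f \<longleftrightarrow> schwartz f \<and>
     (\<forall>x1. fst (f (x1, 0)) = snd (f (x1, 0))) \<and>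
     (\<forall>ds. \<exists>c>0. \<exists>C>0. \<forall>x\<in>halfplane. norm (iter_pd ds f x) \<le> C * exp (- c * norm x))"

(* the differential expression (-i nabla - b A~).sigma, A~(x) = (-x2, 0) *)
definition dirac :: "real \<Rightarrow> (pt \<Rightarrow> spinor) \<Rightarrow> pt \<Rightarrow> spinor" where
  "dirac b f x =
     (let u = (\<lambda>y. fst (f y)); v = (\<lambda>y. snd (f y)); x2 = complex_of_real (b * snd x) in
      (- \<i> * pd True v x + x2 * v x - pd False v x,
       - \<i> * pd True u x + x2 * u x + pd False u x))"

definition L2 :: "pt set \<Rightarrow> (pt \<Rightarrow> spinor) \<Rightarrow> bool" where
  "L2 S f \<longleftrightarrow> set_borel_measurable lborel S f \<and>
     set_integrable lborel S (\<lambda>x. (norm (f x))\<^sup>2)"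

definition l2conv :: "pt set \<Rightarrow> (nat \<Rightarrow> pt \<Rightarrow> spinor) \<Rightarrow> (pt \<Rightarrow> spinor) \<Rightarrow> bool" where
  "l2conv S fs f \<longleftrightarrow>
     (\<forall>n. set_integrable lborel S (\<lambda>x. (norm (fs n x - f x))\<^sup>2)) \<and>
     (\<lambda>n. set_lebesgue_integral lborel S (\<lambda>x. (norm (fs n x - f x))\<^sup>2)) \<longlonglongrightarrow> 0"

(* (psi, g) lies in the graph of H_b = closure of dirac b on C_0^infinity in L^2(R^2,C^2) *)
definition Hb_graph :: "real \<Rightarrow> (pt \<Rightarrow> spinor) \<Rightarrow> (pt \<Rightarrow> spinor) \<Rightarrow> bool" where
  "Hb_graph b psi g \<longleftrightarrow> L2 UNIV psi \<and> L2 UNIV g \<and>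
     (\<exists>phi. (\<forall>n. C0inf (phi n)) \<and> l2conv UNIV phi psi \<and>
            l2conv UNIV (\<lambda>n. dirac b (phi n)) g)"

(* (psi|_E, g|_E) lies in the graph of H_b^E = closure of dirac b on M in L^2(E,C^2);
   only values on E matter *)
definition HbE_graph :: "real \<Rightarrow> (pt \<Rightarrow> spinor) \<Rightarrow> (pt \<Rightarrow> spinor) \<Rightarrow> bool" where
  "HbE_graph b psi g \<longleftrightarrow> L2 halfplane psi \<and> L2 halfplane g \<and>
     (\<exists>phi. (\<forall>n. inM (phi n)) \<and> l2conv halfplane phi psi \<and>
            l2conv halfplane (\<lambda>n. dirac b (phi n)) g)"

end

theory Submission
  imports Defs
begin

(* Approximate psi in the graph norm of H_b by C_0^\<infinity> spinors phi_n.  Because eta vanishes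
   near the boundary line x2 = 0, every eta phi_n is a compactly supported smooth spinor that
   vanishes on the boundary, so it lies in the core of H_b and in the core M of H_b^E.  For the
   differential expression D_b = (-i\<nabla> - b A~).\<sigma> the Leibniz rule gives
     D_b(eta phi_n) = eta D_b phi_n - i (\<sigma>.\<nabla>eta) phi_n,
   and since eta and \<nabla>eta are bounded, eta phi_n \<rightarrow> eta psi and
   D_b(eta phi_n) \<rightarrow> eta g - i (\<sigma>.\<nabla>eta) psi in L^2, on the whole plane and on E alike. *)

section \<open>Partial derivatives and the Leibniz rule\<close>

lemma pd_has_derivative:
  assumes "(f has_derivative D) (at x)"
  shows "pd i f x = D (if i then (1, 0) else (0, 1))"
proof -
  have "((\<lambda>t. (t, snd x)) has_vector_derivative (1, 0)) (at (fst x))"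
       "((\<lambda>t. (fst x, t)) has_vector_derivative (0, 1)) (at (snd x))"
    by (auto intro!: derivative_eq_intros)
  moreover have "(f has_derivative D) (at (fst x, snd x) within S)" for S
    using assms by (simp add: has_derivative_at_withinI)
  ultimately have "((\<lambda>t. f (t, snd x)) has_vector_derivative D (1, 0)) (at (fst x))"
      "((\<lambda>t. f (fst x, t)) has_vector_derivative D (0, 1)) (at (snd x))"
    using vector_derivative_diff_chain_within[of _ _ _ UNIV f D] by (auto simp: o_def)
  then show ?thesis by (simp add: pd_def vector_derivative_at)
qed

lemma pd_bounded_linear:
  assumes "bounded_linear l" "f differentiable (at x)"
  shows "pd i (\<lambda>y. l (f y)) x = l (pd i f x)"
proof -
  obtain D where D: "(f has_derivative D) (at x)"
    using assms(2) by (auto simp: differentiable_def)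
  have "((\<lambda>y. l (f y)) has_derivative (\<lambda>h. l (D h))) (at x)"
    using bounded_linear.has_derivative[OF assms(1) D] .
  then show ?thesis by (simp add: pd_has_derivative[OF D] pd_has_derivative)
qed

lemma pd_add:
  assumes "f differentiable (at x)" "g differentiable (at x)"
  shows "pd i (\<lambda>y. f y + g y) x = pd i f x + pd i g x"
proof -
  obtain Df Dg where f: "(f has_derivative Df) (at x)" and g: "(g has_derivative Dg) (at x)"
    using assms by (auto simp: differentiable_def)
  have "((\<lambda>y. f y + g y) has_derivative (\<lambda>h. Df h + Dg h)) (at x)"
    using f g by (rule has_derivative_add)
  then show ?thesis by (simp add: pd_has_derivative[OF f] pd_has_derivative[OF g] pd_has_derivative)
qed

lemma pd_scaleR:
  fixes a :: "pt \<Rightarrow> real"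
  assumes "a differentiable (at x)" "f differentiable (at x)"
  shows "pd i (\<lambda>y. a y *\<^sub>R f y) x = pd i a x *\<^sub>R f x + a x *\<^sub>R pd i f x"
proof -
  obtain Da Df where a: "(a has_derivative Da) (at x)" and f: "(f has_derivative Df) (at x)"
    using assms by (auto simp: differentiable_def)
  have "((\<lambda>y. a y *\<^sub>R f y) has_derivative (\<lambda>h. a x *\<^sub>R Df h + Da h *\<^sub>R f x)) (at x)"
    using a f by (rule has_derivative_scaleR)
  then show ?thesis
    by (simp add: pd_has_derivative[OF a] pd_has_derivative[OF f] pd_has_derivative add.commute)
qed

lemma pd_eq_0_open:
  assumes "open U" "x \<in> U" "\<And>y. y \<in> U \<Longrightarrow> f y = 0"
  shows "pd i f x = 0"
proof -
  have "(f has_derivative (\<lambda>h. 0)) (at x)"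
    using has_derivative_transform_within_open[of "\<lambda>y. 0" "\<lambda>h. 0" x UNIV U f] assms by simp
  then show ?thesis by (simp add: pd_has_derivative)
qed

lemma iter_pd_eq_0_outside_support:
  assumes "x \<notin> closure {y. f y \<noteq> 0}"
  shows "iter_pd ds f x = 0"
  using assms
proof (induction ds arbitrary: x)
  case Nil
  then show ?case using closure_subset[of "{y. f y \<noteq> 0}"] by auto
next
  case (Cons i ds)
  then show ?case using pd_eq_0_open[of "- closure {y. f y \<noteq> 0}" x "iter_pd ds f" i] by auto
qed

lemma smooth_differentiable: "smooth f \<Longrightarrow> iter_pd ds f differentiable (at x)"
  unfolding smooth_def differentiable_on_def by blast

lemma smooth_continuous_on: "smooth f \<Longrightarrow> continuous_on UNIV (iter_pd ds f)"
  unfolding smooth_def using differentiable_imp_continuous_on by blast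

lemma smooth_borel_measurable: "smooth f \<Longrightarrow> iter_pd ds f \<in> borel_measurable lborel"
  using borel_measurable_continuous_onI[OF smooth_continuous_on] by (simp add: measurable_lborel1)

definition leibniz_sum ::
    "(pt \<Rightarrow> real) \<Rightarrow> (pt \<Rightarrow> 'b::real_normed_vector) \<Rightarrow> (bool list \<times> bool list) list \<Rightarrow> pt \<Rightarrow> 'b"
  where "leibniz_sum a f terms x = (\<Sum>(da, df)\<leftarrow>terms. iter_pd da a x *\<^sub>R iter_pd df f x)"

lemma leibniz_sum_Cons:
  "leibniz_sum a f ((da, df) # terms) x = iter_pd da a x *\<^sub>R iter_pd df f x + leibniz_sum a f terms x"
  by (simp add: leibniz_sum_def)

lemma leibniz_sum_differentiable:
  assumes "smooth a" "smooth f"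
  shows "leibniz_sum a f terms differentiable (at x)"
proof (induction terms)
  case Nil
  then show ?case by (simp add: leibniz_sum_def)
next
  case (Cons t terms)
  then show ?case
    by (cases t) (auto simp: leibniz_sum_Cons[abs_def] assms smooth_differentiable
                       intro!: differentiable_add differentiable_scaleR)
qed

definition leibniz_step :: "bool \<Rightarrow> (bool list \<times> bool list) list \<Rightarrow> (bool list \<times> bool list) list"
  where "leibniz_step i terms = concat (map (\<lambda>(da, df). [(i # da, df), (da, i # df)]) terms)"

lemma pd_leibniz_sum:
  assumes "smooth a" "smooth f"
  shows "pd i (leibniz_sum a f terms) x = leibniz_sum a f (leibniz_step i terms) x"
proof (induction terms)
  case Nil
  then show ?case by (simp add: leibniz_sum_def leibniz_step_def pd_eq_0_open[of UNIV])
next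
  case (Cons t terms)
  obtain da df where t: "t = (da, df)" by fastforce
  have "pd i (leibniz_sum a f (t # terms)) x =
        pd i (\<lambda>x. iter_pd da a x *\<^sub>R iter_pd df f x) x + pd i (leibniz_sum a f terms) x"
    unfolding t leibniz_sum_Cons[abs_def]
    by (rule pd_add) (auto intro!: differentiable_scaleR smooth_differentiable assms leibniz_sum_differentiable)
  also have "pd i (\<lambda>x. iter_pd da a x *\<^sub>R iter_pd df f x) x =
             iter_pd (i # da) a x *\<^sub>R iter_pd df f x + iter_pd da a x *\<^sub>R iter_pd (i # df) f x"
    by (simp add: pd_scaleR smooth_differentiable assms)
  finally show ?case
    using Cons by (simp add: t leibniz_sum_def leibniz_step_def)
qed

lemma iter_pd_scaleR_eq_leibniz_sum:
  assumes "smooth a" "smooth f"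
  obtains terms where "iter_pd ds (\<lambda>x. a x *\<^sub>R f x) = leibniz_sum a f terms"
proof -
  have "\<exists>terms. iter_pd ds (\<lambda>x. a x *\<^sub>R f x) = leibniz_sum a f terms"
  proof (induction ds)
    case Nil
    show ?case by (rule exI[of _ "[([], [])]"]) (simp add: leibniz_sum_def)
  next
    case (Cons i ds)
    then obtain terms where eq: "iter_pd ds (\<lambda>x. a x *\<^sub>R f x) = leibniz_sum a f terms" by blast
    show ?case
      by (intro exI[of _ "leibniz_step i terms"]) (simp add: eq fun_eq_iff pd_leibniz_sum[OF assms])
  qed
  then show ?thesis using that by blast
qed

lemma smooth_scaleR:
  assumes "smooth a" "smooth f"
  shows "smooth (\<lambda>x. a x *\<^sub>R f x)"
  unfolding smooth_def differentiable_on_def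
  by (metis iter_pd_scaleR_eq_leibniz_sum leibniz_sum_differentiable assms)

lemma C0inf_scaleR:
  assumes "smooth a" "C0inf f"
  shows "C0inf (\<lambda>x. a x *\<^sub>R f x)"
proof -
  have "{x. a x *\<^sub>R f x \<noteq> 0} \<subseteq> {x. f x \<noteq> 0}" by auto
  then show ?thesis
    using assms bounded_subset smooth_scaleR unfolding C0inf_def by blast
qed

lemma C0inf_iter_pd_bounded_support:
  assumes "C0inf f"
  obtains B R where "\<And>x. norm (iter_pd ds f x) \<le> B" "\<And>x. R < norm x \<Longrightarrow> iter_pd ds f x = 0"
proof -
  define K where "K = closure {x. f x \<noteq> 0}"
  have "compact K"
    using assms by (simp add: K_def C0inf_def compact_eq_bounded_closed bounded_closure)
  then obtain R where R: "\<And>x. x \<in> K \<Longrightarrow> norm x \<le> R"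
    unfolding bounded_iff by (meson compact_imp_bounded bounded_iff)
  have "compact (iter_pd ds f ` K)"
    using \<open>compact K\<close> assms unfolding C0inf_def
    by (meson compact_continuous_image continuous_on_subset smooth_continuous_on subset_UNIV)
  then obtain B where B: "\<And>x. x \<in> K \<Longrightarrow> norm (iter_pd ds f x) \<le> B"
    unfolding bounded_iff by (meson compact_imp_bounded bounded_iff image_eqI)
  have outside: "iter_pd ds f x = 0" if "x \<notin> K" for x
    using iter_pd_eq_0_outside_support that K_def by blast
  show ?thesis
  proof
    show "norm (iter_pd ds f x) \<le> max B 0" for x
      using B outside by (cases "x \<in> K") (auto simp: le_max_iff_disj)
    show "iter_pd ds f x = 0" if "R < norm x" for x
      using R outside that by (meson leD)
  qed
qed

lemma C0inf_imp_inM: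
  assumes "C0inf f" and boundary: "\<And>x1. fst (f (x1, 0)) = snd (f (x1, 0))"
  shows "inM f"
  unfolding inM_def schwartz_def
proof (intro conjI allI boundary)
  show "smooth f" using assms C0inf_def by blast
next
  fix ds k
  obtain B R where B: "\<And>x. norm (iter_pd ds f x) \<le> B"
    and R: "\<And>x. R < norm x \<Longrightarrow> iter_pd ds f x = 0"
    using C0inf_iter_pd_bounded_support[OF assms(1), where ds = ds] by blast
  have "(1 + norm x) ^ k * norm (iter_pd ds f x) \<le> (1 + \<bar>R\<bar>) ^ k * \<bar>B\<bar>" for x
  proof (cases "R < norm x")
    case False
    then have "(1 + norm x) ^ k \<le> (1 + \<bar>R\<bar>) ^ k" by (intro power_mono) auto
    then show ?thesis using B[of x] by (intro mult_mono) auto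
  qed (simp add: R)
  then show "\<exists>C. \<forall>x. (1 + norm x) ^ k * norm (iter_pd ds f x) \<le> C" by blast
next
  fix ds
  obtain B R where B: "\<And>x. norm (iter_pd ds f x) \<le> B"
    and R: "\<And>x. R < norm x \<Longrightarrow> iter_pd ds f x = 0"
    using C0inf_iter_pd_bounded_support[OF assms(1), where ds = ds] by blast
  have "norm (iter_pd ds f x) \<le> (\<bar>B\<bar> + 1) * exp \<bar>R\<bar> * exp (- 1 * norm x)" for x
  proof (cases "R < norm x")
    case False
    then have "1 \<le> exp \<bar>R\<bar> * exp (- 1 * norm x)" by (simp flip: exp_add)
    then have "\<bar>B\<bar> * 1 \<le> (\<bar>B\<bar> + 1) * (exp \<bar>R\<bar> * exp (- 1 * norm x))"
      by (intro mult_mono) auto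
    then show ?thesis using B[of x] by (simp add: mult.assoc)
  qed (simp add: R)
  moreover have "0 < (\<bar>B\<bar> + 1) * exp \<bar>R\<bar>" by (simp add: add_nonneg_pos)
  ultimately show "\<exists>c>0. \<exists>C>0. \<forall>x\<in>halfplane. norm (iter_pd ds f x) \<le> C * exp (- c * norm x)"
    by (metis zero_less_one)
qed

section \<open>The Dirac expression applied to a product\<close>

(* -i (a \<sigma>1 + c \<sigma>2) w; with (a, c) = \<nabla>eta this is the commutator of dirac b with the
   multiplication by eta *)
definition dirac_commutator :: "real \<Rightarrow> real \<Rightarrow> spinor \<Rightarrow> spinor" where
  "dirac_commutator a c w = (- \<i> * a * snd w - c * snd w, - \<i> * a * fst w + c * fst w)"

lemma dirac_commutator_diff: "dirac_commutator a c w - dirac_commutator a c w' = dirac_commutator a c (w - w')"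
  by (simp add: dirac_commutator_def algebra_simps)

lemma norm_dirac_commutator: "(norm (dirac_commutator a c w))\<^sup>2 = (a\<^sup>2 + c\<^sup>2) * (norm w)\<^sup>2"
proof -
  have "dirac_commutator a c w = (- Complex c a * snd w, Complex c (- a) * fst w)"
    by (simp add: dirac_commutator_def Complex_eq algebra_simps)
  then have "(norm (dirac_commutator a c w))\<^sup>2 = (a\<^sup>2 + c\<^sup>2) * ((cmod (snd w))\<^sup>2 + (cmod (fst w))\<^sup>2)"
    by (simp add: norm_Pair norm_mult power_mult_distrib complex_norm algebra_simps)
  then show ?thesis by (cases w) (simp add: norm_Pair add.commute)
qed

lemma borel_measurable_dirac_commutator [measurable]:
  assumes "a \<in> borel_measurable M" "c \<in> borel_measurable M" "f \<in> borel_measurable M"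
  shows "(\<lambda>x. dirac_commutator (a x) (c x) (f x)) \<in> borel_measurable M"
  unfolding dirac_commutator_def using assms(1,2) assms(3)[folded borel_prod] by measurable

lemma dirac_scaleR:
  assumes "smooth eta" "smooth f"
  shows "dirac b (\<lambda>x. eta x *\<^sub>R f x) x =
         eta x *\<^sub>R dirac b f x + dirac_commutator (pd True eta x) (pd False eta x) (f x)"
proof -
  have eta: "eta differentiable (at x)" and f: "f differentiable (at x)"
    using smooth_differentiable[OF assms(1), of "[]"] smooth_differentiable[OF assms(2), of "[]"] by simp_all
  have "(\<lambda>y. fst (f y)) differentiable (at x)" "(\<lambda>y. snd (f y)) differentiable (at x)"
    using f by (auto intro: differentiable_compose[OF bounded_linear_imp_differentiable]
                         bounded_linear_fst bounded_linear_snd)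
  note components = pd_scaleR[OF eta this(1)] pd_scaleR[OF eta this(2)]
  show ?thesis
    unfolding dirac_def Let_def fst_scaleR snd_scaleR components dirac_commutator_def
    by (simp add: scaleR_conv_of_real algebra_simps)
qed

lemma borel_measurable_dirac:
  assumes "smooth f"
  shows "dirac b f \<in> borel_measurable lborel"
proof -
  have "f differentiable (at x)" for x
    using smooth_differentiable[OF assms, of "[]"] by simp
  then have "dirac b f = (\<lambda>x. (- \<i> * snd (pd True f x) + complex_of_real (b * snd x) * snd (f x) - snd (pd False f x),
                              - \<i> * fst (pd True f x) + complex_of_real (b * snd x) * fst (f x) + fst (pd False f x)))"
    by (simp add: fun_eq_iff dirac_def Let_def pd_bounded_linear bounded_linear_fst bounded_linear_snd)
  moreover have "continuous_on UNIV (pd i f)" "continuous_on UNIV f" for i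
    using smooth_continuous_on[OF assms, of "[i]"] smooth_continuous_on[OF assms, of "[]"] by simp_all
  ultimately have "continuous_on UNIV (dirac b f)"
    by (simp only:) (intro continuous_intros)
  then show ?thesis by (simp add: borel_measurable_continuous_onI measurable_lborel1)
qed

section \<open>L^2 convergence under pointwise domination\<close>

lemma set_integral_dominated:
  fixes r P :: "'a \<Rightarrow> real"
  assumes "S \<in> sets M" "r \<in> borel_measurable M" "integrable M P"
    and "\<And>x. 0 \<le> r x" "\<And>x. r x \<le> P x"
  shows "set_integrable M S r" "0 \<le> set_lebesgue_integral M S r" "set_lebesgue_integral M S r \<le> integral\<^sup>L M P"
proof -
  have le: "0 \<le> indicator S x * r x" "indicator S x * r x \<le> P x" for x
    using assms(4,5)[of x] by (auto simp: indicator_def)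
  show si: "set_integrable M S r"
    unfolding set_integrable_def
    by (rule Bochner_Integration.integrable_bound[OF assms(3)])
       (use assms(1,2) le in \<open>auto intro!: AE_I2 intro: order_trans[OF _ abs_ge_self]\<close>)
  show "0 \<le> set_lebesgue_integral M S r"
    unfolding set_lebesgue_integral_def using le by (simp add: integral_nonneg_AE)
  show "set_lebesgue_integral M S r \<le> integral\<^sup>L M P"
    unfolding set_lebesgue_integral_def using si le assms(3) by (intro integral_mono) (auto simp: set_integrable_def)
qed

lemma L2_dominated:
  assumes "S \<in> sets lborel" "h \<in> borel_measurable lborel" "L2 UNIV p" "L2 UNIV q" "\<alpha> \<ge> 0" "\<beta> \<ge> 0"
    and "\<And>x. (norm (h x))\<^sup>2 \<le> \<alpha> * (norm (p x))\<^sup>2 + \<beta> * (norm (q x))\<^sup>2"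
  shows "L2 S h"
proof -
  have "integrable lborel (\<lambda>x. (norm (p x))\<^sup>2)" "integrable lborel (\<lambda>x. (norm (q x))\<^sup>2)"
    using assms(3,4) by (simp_all add: L2_def set_integrable_def)
  then have "integrable lborel (\<lambda>x. \<alpha> * (norm (p x))\<^sup>2 + \<beta> * (norm (q x))\<^sup>2)" by simp
  then show ?thesis
    unfolding L2_def set_borel_measurable_def
    using set_integral_dominated(1)[of S lborel "\<lambda>x. (norm (h x))\<^sup>2"] assms(1,2,7) by simp
qed

lemma l2conv_dominated:
  fixes F fs gs :: "nat \<Rightarrow> pt \<Rightarrow> spinor"
  assumes "S \<in> sets lborel" "\<And>n. (\<lambda>x. F n x - H x) \<in> borel_measurable lborel"
    and "l2conv UNIV fs f" "l2conv UNIV gs g" "\<alpha> \<ge> 0" "\<beta> \<ge> 0"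
    and "\<And>n x. (norm (F n x - H x))\<^sup>2 \<le> \<alpha> * (norm (fs n x - f x))\<^sup>2 + \<beta> * (norm (gs n x - g x))\<^sup>2"
  shows "l2conv S F H"
proof -
  define p where "p = (\<lambda>n x. (norm (fs n x - f x))\<^sup>2)"
  define q where "q = (\<lambda>n x. (norm (gs n x - g x))\<^sup>2)"
  have p: "integrable lborel (p n)" "(\<lambda>n. integral\<^sup>L lborel (p n)) \<longlonglongrightarrow> 0"
   and q: "integrable lborel (q n)" "(\<lambda>n. integral\<^sup>L lborel (q n)) \<longlonglongrightarrow> 0" for n
    using assms(3,4) by (simp_all add: p_def q_def l2conv_def set_integrable_def set_lebesgue_integral_def)
  have "(\<lambda>n. \<alpha> * integral\<^sup>L lborel (p n) + \<beta> * integral\<^sup>L lborel (q n)) \<longlonglongrightarrow> \<alpha> * 0 + \<beta> * 0"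
    by (intro tendsto_intros p q)
  then have lim: "(\<lambda>n. integral\<^sup>L lborel (\<lambda>x. \<alpha> * p n x + \<beta> * q n x)) \<longlonglongrightarrow> 0"
    using p q by simp
  have integrable: "integrable lborel (\<lambda>x. \<alpha> * p n x + \<beta> * q n x)" for n
    using p q by simp
  have measurable_diff: "(\<lambda>x. (norm (F n x - H x))\<^sup>2) \<in> borel_measurable lborel" for n
    using assms(2) by measurable
  have bound: "(norm (F n x - H x))\<^sup>2 \<le> \<alpha> * p n x + \<beta> * q n x" for n x
    using assms(7) by (simp add: p_def q_def)
  note dominated = set_integral_dominated[OF assms(1) measurable_diff integrable zero_le_power2 bound]
  show ?thesis
    unfolding l2conv_def
    by (intro conjI allI dominated tendsto_sandwich[OF _ _ tendsto_const lim] always_eventually)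
qed

lemma norm_add_power2_le: "(norm (u + v))\<^sup>2 \<le> 2 * (norm u)\<^sup>2 + 2 * (norm (v :: 'a :: real_normed_vector))\<^sup>2"
proof -
  have "(norm (u + v))\<^sup>2 \<le> (norm u + norm v)\<^sup>2"
    by (simp add: norm_triangle_ineq power_mono)
  also have "\<dots> \<le> 2 * (norm u)\<^sup>2 + 2 * (norm v)\<^sup>2"
    using sum_squares_ge_zero[of "norm u - norm v" 0] by (simp add: power2_eq_square algebra_simps)
  finally show ?thesis .
qed

lemma bounded_range_imp_power2_le:
  fixes f :: "'a \<Rightarrow> real"
  assumes "bounded (range f)"
  obtains K where "\<And>x. (f x)\<^sup>2 \<le> K"
proof -
  obtain B where "\<And>x. \<bar>f x\<bar> \<le> B" using assms by (auto simp: bounded_real)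
  then have "(f x)\<^sup>2 \<le> B\<^sup>2" for x
    by (metis abs_ge_zero power2_abs power_mono)
  then show ?thesis using that by blast
qed

lemma cutoff_multiplier_bound:
  fixes eta :: "pt \<Rightarrow> real"
  assumes "bounded (range eta)" "\<And>i. bounded (range (pd i eta))"
  obtains K where "K \<ge> 0" "\<And>x w. (norm (eta x *\<^sub>R w))\<^sup>2 \<le> K * (norm w)\<^sup>2"
    "\<And>x w. (norm (dirac_commutator (pd True eta x) (pd False eta x) w))\<^sup>2 \<le> K * (norm w)\<^sup>2"
proof -
  obtain K0 K1 K2
    where K: "\<And>x. (eta x)\<^sup>2 \<le> K0" "\<And>x. (pd True eta x)\<^sup>2 \<le> K1" "\<And>x. (pd False eta x)\<^sup>2 \<le> K2"
    using bounded_range_imp_power2_le assms by metis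
  have nonneg: "0 \<le> K0" "0 \<le> K1" "0 \<le> K2"
    using K[of undefined] zero_le_power2 order_trans by metis+
  show ?thesis
  proof
    show "0 \<le> K0 + K1 + K2" using nonneg by simp
    show "(norm (eta x *\<^sub>R w))\<^sup>2 \<le> (K0 + K1 + K2) * (norm w)\<^sup>2" for x w
      using K(1)[of x] nonneg by (simp add: power_mult_distrib mult_right_mono)
    show "(norm (dirac_commutator (pd True eta x) (pd False eta x) w))\<^sup>2
        \<le> (K0 + K1 + K2) * (norm w)\<^sup>2" for x w
      unfolding norm_dirac_commutator using K(2,3)[of x] nonneg by (intro mult_right_mono) auto
  qed
qed

lemma l2conv_cutoff:
  fixes eta :: "pt \<Rightarrow> real" and phi :: "nat \<Rightarrow> pt \<Rightarrow> spinor"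
  assumes eta: "smooth eta" "bounded (range eta)" "\<And>i. bounded (range (pd i eta))"
    and phi: "\<And>n. smooth (phi n)" "l2conv UNIV phi psi" "l2conv UNIV (\<lambda>n. dirac b (phi n)) g"
    and L2: "L2 UNIV psi" "L2 UNIV g"
    and S: "S \<in> sets lborel"
  defines "h \<equiv> \<lambda>x. eta x *\<^sub>R g x + dirac_commutator (pd True eta x) (pd False eta x) (psi x)"
  shows "L2 S (\<lambda>x. eta x *\<^sub>R psi x)" "L2 S h"
    "l2conv S (\<lambda>n x. eta x *\<^sub>R phi n x) (\<lambda>x. eta x *\<^sub>R psi x)"
    "l2conv S (\<lambda>n. dirac b (\<lambda>x. eta x *\<^sub>R phi n x)) h"
proof -
  obtain K where K: "K \<ge> 0" "\<And>x (w :: spinor). (norm (eta x *\<^sub>R w))\<^sup>2 \<le> K * (norm w)\<^sup>2"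
    "\<And>x w. (norm (dirac_commutator (pd True eta x) (pd False eta x) w))\<^sup>2 \<le> K * (norm w)\<^sup>2"
    using cutoff_multiplier_bound[OF eta(2,3)] by blast
  have [measurable]: "psi \<in> borel_measurable lborel" "g \<in> borel_measurable lborel"
    using L2 by (simp_all add: L2_def set_borel_measurable_def)
  have [measurable]: "eta \<in> borel_measurable lborel" "pd i eta \<in> borel_measurable lborel"
      "phi n \<in> borel_measurable lborel"
      "dirac b (\<lambda>x. eta x *\<^sub>R phi n x) \<in> borel_measurable lborel" for i n
    using smooth_borel_measurable[OF eta(1), of "[]"] smooth_borel_measurable[OF eta(1), of "[i]"]
      smooth_borel_measurable[OF phi(1), of "[]"] borel_measurable_dirac[OF smooth_scaleR[OF eta(1) phi(1)]]
    by simp_all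
  have h_measurable [measurable]: "h \<in> borel_measurable lborel"
    unfolding h_def by measurable
  have dirac_diff: "dirac b (\<lambda>x. eta x *\<^sub>R phi n x) x - h x =
      eta x *\<^sub>R (dirac b (phi n) x - g x) + dirac_commutator (pd True eta x) (pd False eta x) (phi n x - psi x)" for n x
    by (simp add: h_def dirac_scaleR eta(1) phi(1) flip: dirac_commutator_diff) (simp add: algebra_simps)
  have scale_bound: "(norm (eta x *\<^sub>R u))\<^sup>2 \<le> K * (norm u)\<^sup>2 + 0 * z" for x z and u :: spinor
    using K(2)[of x u] by simp
  have sum_bound: "(norm (eta x *\<^sub>R u + dirac_commutator (pd True eta x) (pd False eta x) v))\<^sup>2
      \<le> (2 * K) * (norm u)\<^sup>2 + (2 * K) * (norm v)\<^sup>2" for x u v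
    using norm_add_power2_le[of "eta x *\<^sub>R u" "dirac_commutator (pd True eta x) (pd False eta x) v"]
      K(2)[of x u] K(3)[of x v]
    by linarith
  show "L2 S (\<lambda>x. eta x *\<^sub>R psi x)"
    by (rule L2_dominated[OF S _ L2(1) L2(1) K(1) order_refl scale_bound]) simp
  have h_bound: "(norm (h x))\<^sup>2 \<le> (2 * K) * (norm (g x))\<^sup>2 + (2 * K) * (norm (psi x))\<^sup>2" for x
    unfolding h_def by (rule sum_bound)
  show "L2 S h"
    by (rule L2_dominated[OF S h_measurable L2(2) L2(1) _ _ h_bound]) (simp_all add: K(1))
  have phi_bound: "(norm (eta x *\<^sub>R phi n x - eta x *\<^sub>R psi x))\<^sup>2
      \<le> K * (norm (phi n x - psi x))\<^sup>2 + 0 * (norm (phi n x - psi x))\<^sup>2" for n x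
    unfolding scaleR_diff_right[symmetric] by (rule scale_bound)
  show "l2conv S (\<lambda>n x. eta x *\<^sub>R phi n x) (\<lambda>x. eta x *\<^sub>R psi x)"
    by (rule l2conv_dominated[OF S _ phi(2) phi(2) K(1) order_refl phi_bound]) simp
  have dirac_bound: "(norm (dirac b (\<lambda>x. eta x *\<^sub>R phi n x) x - h x))\<^sup>2
      \<le> (2 * K) * (norm (dirac b (phi n) x - g x))\<^sup>2 + (2 * K) * (norm (phi n x - psi x))\<^sup>2" for n x
    unfolding dirac_diff by (rule sum_bound)
  show "l2conv S (\<lambda>n. dirac b (\<lambda>x. eta x *\<^sub>R phi n x)) h"
    by (rule l2conv_dominated[OF S _ phi(3) phi(2) _ _ dirac_bound]) (simp_all add: K(1))
qed

lemma sets_halfplane: "halfplane \<in> sets lborel"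
proof -
  have "closed halfplane"
    unfolding halfplane_def by (intro closed_Collect_le continuous_intros)
  then show ?thesis by simp
qed

lemma support_above_imp_eq_0_on_axis:
  fixes f :: "pt \<Rightarrow> 'a::zero" and c :: real
  assumes "closure {x. f x \<noteq> 0} \<subseteq> {x. snd x > c}" "c \<ge> 0"
  shows "f (x1, 0) = 0"
proof (rule ccontr)
  assume "f (x1, 0) \<noteq> 0"
  then have "(x1, 0) \<in> closure {x. f x \<noteq> 0}"
    using closure_subset[of "{x. f x \<noteq> 0}"] by blast
  then have "c < snd (x1, 0 :: real)" using assms(1) by blast
  then show False using assms(2) by simp
qed

theorem proposition4p1:
  fixes b L :: real and eta :: "pt \<Rightarrow> real" and psi g :: "pt \<Rightarrow> spinor"
  assumes "b \<ge> 0" and "L \<ge> 1"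
    and "smooth eta"
    and "\<forall>x. eta x \<in> {0..1}"
    and "\<forall>x y. snd x = snd y \<longrightarrow> eta x = eta y"
    and "\<forall>ds. bounded (range (iter_pd ds eta))"
    and "closure {x. eta x \<noteq> 0} \<subseteq> {x. snd x > sqrt L / 4}"
    and "Hb_graph b psi g"
  shows "\<exists>h. Hb_graph b (\<lambda>x. eta x *\<^sub>R psi x) h \<and>
             HbE_graph b (\<lambda>x. eta x *\<^sub>R psi x) h"
proof -
  obtain phi where phi: "\<And>n. C0inf (phi n)" "l2conv UNIV phi psi" "l2conv UNIV (\<lambda>n. dirac b (phi n)) g"
    and L2: "L2 UNIV psi" "L2 UNIV g"
    using assms(8) unfolding Hb_graph_def by blast
  define h where "h = (\<lambda>x. eta x *\<^sub>R g x + dirac_commutator (pd True eta x) (pd False eta x) (psi x))"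
  have "eta (x1, 0) = 0" for x1
    by (rule support_above_imp_eq_0_on_axis[OF assms(7)]) (use assms(2) in simp)
  then have cores: "C0inf (\<lambda>x. eta x *\<^sub>R phi n x)" "inM (\<lambda>x. eta x *\<^sub>R phi n x)" for n
    using C0inf_scaleR[OF assms(3) phi(1)] C0inf_imp_inM by simp_all
  have "bounded (range eta)" "bounded (range (pd i eta))" "smooth (phi n)" for i n
    using assms(6)[rule_format, of "[]"] assms(6)[rule_format, of "[i]"] phi(1) C0inf_def by simp_all
  note cutoff = l2conv_cutoff[OF assms(3) this phi(2,3) L2, folded h_def]
  have "Hb_graph b (\<lambda>x. eta x *\<^sub>R psi x) h"
    unfolding Hb_graph_def
    by (intro conjI exI[of _ "\<lambda>n x. eta x *\<^sub>R phi n x"] allI cores cutoff) simp_all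
  moreover have "HbE_graph b (\<lambda>x. eta x *\<^sub>R psi x) h"
    unfolding HbE_graph_def
    by (intro conjI exI[of _ "\<lambda>n x. eta x *\<^sub>R phi n x"] allI cores cutoff sets_halfplane)
  ultimately show ?thesis by blast
qed

end
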